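(* Let $\mathcal{M}\in\mathcal{K}(2^{\mathbb{N}})$ and suppose $\mathcal{M}$ contains an infinite subset of $\mathbb{N}$. Then $T^*[\mathcal{M},\tfrac12]$ is isomorphic to the $c_0$-sum of a sequence of finite-dimensional spaces, and consequently $T^*[\mathcal{M},\tfrac12]$ embeds isomorphically into $c_0$.
   Context: Elements of $2^{\mathbb{N}}$ are identified with subsets of $\mathbb{N}$, and $\mathcal{K}(2^{\mathbb{N}})$ is the space of compact subsets of $2^{\mathbb{N}}$ (so $\mathcal{M}$ is a closed family of subsets of $\mathbb{N}$). Let $e_n=\mathbf{1}_{\{n\}}$ be the canonical basis of $c_{00}$ (finitely supported real sequences), and for $E\subset\mathbb{N}$, $x\in c_{00}$ let $Ex=\mathbf{1}_E\cdot x$. A family $\{E_1,\dots,E_n\}$ of successive finite subsets of $\mathbb{N}$ is $\mathcal{M}$-admissible if some element of $\mathcal{M}$ contains numbers $m_1,\dots,m_n$ with $m_1\le E_1<m_2\le E_2<\dots<m_n\le E_n$. Let $\Theta_{\mathcal{M}}$ be the smallest absolutely convex subset of $c_{00}$ containing all $e_i$ and such that whenever $\{E_1,\dots,E_n\}$ is $\mathcal{M}$-admissible and $x_1,\dots,x_n\in\Theta_{\mathcal{M}}$, then $\frac12\sum_{k=1}^n E_kx_k\in\Theta_{\mathcal{M}}$. Let $\|\cdot\|_{\mathcal{M}}$ be the Minkowski gauge of $\Theta_{\mathcal{M}}$ and $T^*[\mathcal{M},\frac12]$ the completion of $(c_{00},\|\cdot\|_{\mathcal{M}})$. *)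

theory Defs
  imports "HOL-Analysis.Analysis"
begin

text \<open>Subsets of nat identified with points of the Cantor space 2^N (characteristic functions);
  M is compact in 2^N iff its image is closed in the product of discrete two-point spaces.\<close>
definition cantor_compact :: "nat set set \<Rightarrow> bool" where
  "cantor_compact M \<longleftrightarrow>
     compactin (product_topology (\<lambda>_. discrete_topology (UNIV::bool set)) UNIV)
               ((\<lambda>A n. n \<in> A) ` M)"

definition c00 :: "(nat \<Rightarrow> real) set" where
  "c00 = {x. finite {i. x i \<noteq> 0}}"

definition unitvec :: "nat \<Rightarrow> nat \<Rightarrow> real" where
  "unitvec n = (\<lambda>i. if i = n then 1 else 0)"

definition admissible :: "nat set set \<Rightarrow> nat set list \<Rightarrow> bool" where
  "admissible M Es \<longleftrightarrow>
     (\<forall>k < length Es. finite (Es!k) \<and> Es!k \<noteq> {}) \<and>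
     (\<forall>k. Suc k < length Es \<longrightarrow> (\<forall>a\<in>Es!k. \<forall>b\<in>Es!Suc k. a < b)) \<and>
     (\<exists>ms F. length ms = length Es \<and> F \<in> M \<and> set ms \<subseteq> F \<and>
        (\<forall>k < length Es. \<forall>j \<in> Es!k. ms!k \<le> j) \<and>
        (\<forall>k. Suc k < length Es \<longrightarrow> (\<forall>j \<in> Es!k. j < ms!Suc k)))"

inductive_set Theta :: "nat set set \<Rightarrow> (nat \<Rightarrow> real) set" for M where
  basis: "unitvec n \<in> Theta M"
| absconv: "x \<in> Theta M \<Longrightarrow> y \<in> Theta M \<Longrightarrow> \<bar>a\<bar> + \<bar>b\<bar> \<le> 1 \<Longrightarrow>
            (\<lambda>i. a * x i + b * y i) \<in> Theta M"
| admis: "admissible M Es \<Longrightarrow> length xs = length Es \<Longrightarrow> (\<forall>x \<in> set xs. x \<in> Theta M) \<Longrightarrow>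
          (\<lambda>i. (1/2) * (\<Sum>k < length Es. indicator (Es!k) i * (xs!k) i)) \<in> Theta M"

text \<open>Minkowski gauge of Theta_M (the norm of T^*[M,1/2] on c00).\<close>
definition normM :: "nat set set \<Rightarrow> (nat \<Rightarrow> real) \<Rightarrow> real" where
  "normM M x = Inf {t. 0 < t \<and> (\<exists>y \<in> Theta M. x = (\<lambda>i. t * y i))}"

text \<open>A norm N on the d-dimensional space of vectors supported in {..<d}
  (a model of an arbitrary d-dimensional normed space).\<close>
definition fd_norm :: "nat \<Rightarrow> ((nat \<Rightarrow> real) \<Rightarrow> real) \<Rightarrow> bool" where
  "fd_norm d N \<longleftrightarrow>
     (\<forall>x. (\<forall>i\<ge>d. x i = 0) \<longrightarrow> 0 \<le> N x \<and> (N x = 0 \<longleftrightarrow> x = (\<lambda>_. 0))) \<and>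
     (\<forall>x a. (\<forall>i\<ge>d. x i = 0) \<longrightarrow> N (\<lambda>i. a * x i) = \<bar>a\<bar> * N x) \<and>
     (\<forall>x y. (\<forall>i\<ge>d. x i = 0) \<longrightarrow> (\<forall>i\<ge>d. y i = 0) \<longrightarrow> N (\<lambda>i. x i + y i) \<le> N x + N y)"

definition c0_sum :: "(nat \<Rightarrow> nat) \<Rightarrow> (nat \<Rightarrow> (nat \<Rightarrow> real) \<Rightarrow> real) \<Rightarrow> (nat \<Rightarrow> nat \<Rightarrow> real) set" where
  "c0_sum d N = {y. (\<forall>n. \<forall>i\<ge>d n. y n i = 0) \<and> (\<lambda>n. N n (y n)) \<longlonglongrightarrow> 0}"

definition c0_sum_norm :: "(nat \<Rightarrow> (nat \<Rightarrow> real) \<Rightarrow> real) \<Rightarrow> (nat \<Rightarrow> nat \<Rightarrow> real) \<Rightarrow> real" where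
  "c0_sum_norm N y = (SUP n. N n (y n))"

definition c0 :: "(nat \<Rightarrow> real) set" where
  "c0 = {y. y \<longlonglongrightarrow> 0}"

definition c0_norm :: "(nat \<Rightarrow> real) \<Rightarrow> real" where
  "c0_norm y = (SUP i. \<bar>y i\<bar>)"

definition linear_on_c00 :: "((nat \<Rightarrow> real) \<Rightarrow> 'b \<Rightarrow> real) \<Rightarrow> bool" where
  "linear_on_c00 T \<longleftrightarrow> (\<forall>x\<in>c00. \<forall>y\<in>c00. \<forall>a b.
      T (\<lambda>i. a * x i + b * y i) = (\<lambda>j. a * T x j + b * T y j))"

definition linear_on_c00' :: "((nat \<Rightarrow> real) \<Rightarrow> nat \<Rightarrow> nat \<Rightarrow> real) \<Rightarrow> bool" where
  "linear_on_c00' T \<longleftrightarrow> (\<forall>x\<in>c00. \<forall>y\<in>c00. \<forall>a b.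
      T (\<lambda>i. a * x i + b * y i) = (\<lambda>n j. a * T x n j + b * T y n j))"

end

theory Submission
  imports Defs
begin

text \<open>Pick an infinite A \<in> M, enumerate it as a_0 < a_1 < ..., and cut \<nat> into the blocks
  I_0 = [0, a_0) and I_(n+1) = [a_n, a_(n+1)). Block projections P_n are contractive, and the family
  I_1, ..., I_K is M-admissible (witnessed by a_0, ..., a_(K-1) \<in> A), so the closure property of
  Theta gives ||x - P_0 x|| \<le> 2 sup_n ||P_n x||. Hence ||x|| is equivalent to sup_n ||P_n x||, i.e.
  x \<mapsto> (P_n x)_n is an isomorphism onto the c_0-sum of the finite-dimensional blocks. Each block is
  2-normed by finitely many functionals of norm at most one (Hahn-Banach at the points of a fine grid
  of its unit sphere), and listing all these functionals for all blocks embeds the c_0-sum into c_0.\<close>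

section \<open>Hahn-Banach in finitely many coordinates\<close>

definition supported_on :: "nat set \<Rightarrow> (nat \<Rightarrow> real) \<Rightarrow> bool" where
  "supported_on I x \<longleftrightarrow> (\<forall>i. i \<notin> I \<longrightarrow> x i = 0)"

lemma supported_on_zero [simp]: "supported_on I (\<lambda>_. 0)"
  by (simp add: supported_on_def)

lemma supported_on_add: "supported_on I x \<Longrightarrow> supported_on I y \<Longrightarrow> supported_on I (\<lambda>i. x i + y i)"
  by (simp add: supported_on_def)

lemma supported_on_diff: "supported_on I x \<Longrightarrow> supported_on I y \<Longrightarrow> supported_on I (\<lambda>i. x i - y i)"
  by (simp add: supported_on_def)

lemma supported_on_scale: "supported_on I x \<Longrightarrow> supported_on I (\<lambda>i. a * x i)"
  by (simp add: supported_on_def)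

lemma supported_on_minus: "supported_on I x \<Longrightarrow> supported_on I (\<lambda>i. - x i)"
  by (simp add: supported_on_def)

lemma supported_on_subset: "supported_on I x \<Longrightarrow> I \<subseteq> J \<Longrightarrow> supported_on J x"
  by (auto simp: supported_on_def)

lemma supported_on_empty: "supported_on {} x \<longleftrightarrow> x = (\<lambda>_. 0)"
  by (auto simp: supported_on_def)

lemma finite_supported_on_values:
  assumes "finite I" "finite V"
  shows "finite {g. supported_on I g \<and> (\<forall>i\<in>I. g i \<in> V)}"
proof (rule finite_imageD)
  let ?G = "{g. supported_on I g \<and> (\<forall>i\<in>I. g i \<in> V)}"
  show "finite ((\<lambda>g. restrict g I) ` ?G)"
    by (rule finite_subset[of _ "PiE I (\<lambda>_. V)"]) (use assms in \<open>auto intro: finite_PiE\<close>)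
  show "inj_on (\<lambda>g. restrict g I) ?G"
    by (rule inj_onI) (auto simp: supported_on_def fun_eq_iff restrict_def, metis)
qed

definition sublinear_on :: "nat set \<Rightarrow> ((nat \<Rightarrow> real) \<Rightarrow> real) \<Rightarrow> bool" where
  "sublinear_on I p \<longleftrightarrow>
     (\<forall>x y. supported_on I x \<longrightarrow> supported_on I y \<longrightarrow> p (\<lambda>i. x i + y i) \<le> p x + p y) \<and>
     (\<forall>x t. supported_on I x \<longrightarrow> 0 < t \<longrightarrow> p (\<lambda>i. t * x i) = t * p x)"

lemma
  assumes "sublinear_on I p" "supported_on I x"
  shows sublinear_on_add: "supported_on I y \<Longrightarrow> p (\<lambda>i. x i + y i) \<le> p x + p y"
    and sublinear_on_scale: "0 < t \<Longrightarrow> p (\<lambda>i. t * x i) = t * p x"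
  using assms by (auto simp: sublinear_on_def)

lemma sublinear_on_zero: "sublinear_on I p \<Longrightarrow> p (\<lambda>_. 0) = 0"
  using sublinear_on_scale[of I p "\<lambda>_. 0" 2] by simp

lemma sublinear_on_scale_nonneg:
  "sublinear_on I p \<Longrightarrow> supported_on I x \<Longrightarrow> 0 \<le> t \<Longrightarrow> p (\<lambda>i. t * x i) = t * p x"
  by (cases "t = 0") (auto simp: sublinear_on_zero sublinear_on_scale)

lemma sublinear_on_subset: "sublinear_on I p \<Longrightarrow> J \<subseteq> I \<Longrightarrow> sublinear_on J p"
  unfolding sublinear_on_def by (meson supported_on_subset)

lemma exists_between:
  fixes f g :: "'a \<Rightarrow> real"
  assumes "S \<noteq> {}" and "\<And>u v. u \<in> S \<Longrightarrow> v \<in> S \<Longrightarrow> f u \<le> g v"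
  shows "\<exists>c. (\<forall>u\<in>S. f u \<le> c) \<and> (\<forall>v\<in>S. c \<le> g v)"
proof (intro exI conjI ballI)
  obtain u0 where "u0 \<in> S" using assms(1) by blast
  then have "bdd_below (g ` S)"
    using assms(2) by (intro bdd_belowI[of _ "f u0"]) auto
  then show "Inf (g ` S) \<le> g v" if "v \<in> S" for v
    using that by (simp add: cINF_lower)
  show "f u \<le> Inf (g ` S)" if "u \<in> S" for u
    using assms that by (simp add: cINF_greatest)
qed

context
  fixes j F p w
  assumes p: "sublinear_on (insert j F) p"
    and dominated: "\<And>v. supported_on F v \<Longrightarrow> (\<Sum>i\<in>F. w i * v i) \<le> p v"
begin

private lemma supported_on_insert:
  "supported_on F v \<Longrightarrow> supported_on (insert j F) (\<lambda>i. v i + t * unitvec j i)"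
  by (auto simp: supported_on_def unitvec_def)

private lemma sublinear_on_insert_scale:
  assumes "supported_on F v" "0 < t"
  shows "p (\<lambda>i. v i + (b * t) * unitvec j i) = t * p (\<lambda>i. v i / t + b * unitvec j i)"
proof -
  have "(\<lambda>i. v i + (b * t) * unitvec j i) = (\<lambda>i. t * (v i / t + b * unitvec j i))"
    using assms(2) by (simp add: fun_eq_iff distrib_left)
  moreover have "supported_on F (\<lambda>i. v i / t)"
    using assms(1) by (simp add: supported_on_def)
  ultimately show ?thesis
    using sublinear_on_scale[OF p supported_on_insert[of "\<lambda>i. v i / t" b]] assms(2) by simp
qed

text \<open>Subadditivity of p makes the admissible interval for the new coordinate value nonempty.\<close>
lemma exists_extension_value:
  "\<exists>c. (\<forall>u. supported_on F u \<longrightarrow> (\<Sum>i\<in>F. w i * u i) - p (\<lambda>i. u i - unitvec j i) \<le> c) \<and>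
       (\<forall>v. supported_on F v \<longrightarrow> c \<le> p (\<lambda>i. v i + unitvec j i) - (\<Sum>i\<in>F. w i * v i))"
proof -
  have "(\<Sum>i\<in>F. w i * u i) - p (\<lambda>i. u i - unitvec j i) \<le> p (\<lambda>i. v i + unitvec j i) - (\<Sum>i\<in>F. w i * v i)"
    if u: "supported_on F u" and v: "supported_on F v" for u v
  proof -
    have "(\<Sum>i\<in>F. w i * u i) + (\<Sum>i\<in>F. w i * v i) = (\<Sum>i\<in>F. w i * (u i + v i))"
      by (simp add: sum.distrib distrib_left)
    also have "\<dots> \<le> p (\<lambda>i. (u i - unitvec j i) + (v i + unitvec j i))"
      using dominated[OF supported_on_add[OF u v]] by simp
    also have "\<dots> \<le> p (\<lambda>i. u i - unitvec j i) + p (\<lambda>i. v i + unitvec j i)"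
      using sublinear_on_add[OF p supported_on_insert[OF u, of "-1"] supported_on_insert[OF v, of 1]]
      by simp
    finally show ?thesis by simp
  qed
  then have "\<exists>c. (\<forall>u\<in>Collect (supported_on F). (\<Sum>i\<in>F. w i * u i) - p (\<lambda>i. u i - unitvec j i) \<le> c) \<and>
      (\<forall>v\<in>Collect (supported_on F). c \<le> p (\<lambda>i. v i + unitvec j i) - (\<Sum>i\<in>F. w i * v i))"
    by (intro exists_between) (auto intro: exI[of _ "\<lambda>_. 0"])
  then show ?thesis
    by simp
qed

lemma dominated_functional_insert:
  assumes "finite F" "j \<notin> F"
    and lo: "\<And>u. supported_on F u \<Longrightarrow> (\<Sum>i\<in>F. w i * u i) - p (\<lambda>i. u i - unitvec j i) \<le> c"
    and up: "\<And>v. supported_on F v \<Longrightarrow> c \<le> p (\<lambda>i. v i + unitvec j i) - (\<Sum>i\<in>F. w i * v i)"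
    and y: "supported_on (insert j F) y"
  shows "(\<Sum>i\<in>insert j F. (w(j := c)) i * y i) \<le> p y"
proof -
  define v where "v = y(j := 0)"
  define t where "t = y j"
  have v: "supported_on F v" using y by (auto simp: supported_on_def v_def)
  have yv: "y = (\<lambda>i. v i + t * unitvec j i)" by (auto simp: v_def t_def unitvec_def)
  have wv: "(\<Sum>i\<in>F. w i * (v i / r)) = (\<Sum>i\<in>F. w i * v i) / r" for r
    by (simp add: sum_divide_distrib)
  have vr: "supported_on F (\<lambda>i. v i / r)" for r
    using v by (simp add: supported_on_def)
  have "(\<Sum>i\<in>insert j F. (w(j := c)) i * y i) = c * t + (\<Sum>i\<in>F. w i * v i)"
    using assms(1,2) by (auto simp: t_def v_def intro!: sum.cong)
  also have "\<dots> \<le> p y"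
  proof (cases t "0 :: real" rule: linorder_cases)
    case less
    define s where "s = - t"
    define q where "q = p (\<lambda>i. v i / s - unitvec j i)"
    have "(\<Sum>i\<in>F. w i * v i) / s - q \<le> c"
      using lo[OF vr[of s]] wv[of s] by (simp add: q_def)
    moreover have "p y = s * q"
      using sublinear_on_insert_scale[OF v, of s "-1"] less by (simp add: yv s_def q_def)
    ultimately show ?thesis
      using less by (simp add: s_def field_simps)
  next
    case equal
    then show ?thesis using dominated[OF v] yv by simp
  next
    case greater
    define q where "q = p (\<lambda>i. v i / t + unitvec j i)"
    have "c \<le> q - (\<Sum>i\<in>F. w i * v i) / t"
      using up[OF vr] wv by (simp add: q_def)
    moreover have "p y = t * q"
      using sublinear_on_insert_scale[OF v greater, of 1] by (simp add: yv q_def)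
    ultimately show ?thesis
      using greater by (simp add: field_simps)
  qed
  finally show ?thesis .
qed

end

lemma finite_hahn_banach:
  assumes "finite I" "sublinear_on I p"
  shows "\<exists>w. \<forall>y. supported_on I y \<longrightarrow> (\<Sum>i\<in>I. w i * y i) \<le> p y"
  using assms
proof (induction I rule: finite_induct)
  case empty
  then show ?case by (simp add: supported_on_empty sublinear_on_zero)
next
  case (insert j F)
  then obtain w where w: "\<And>v. supported_on F v \<Longrightarrow> (\<Sum>i\<in>F. w i * v i) \<le> p v"
    using sublinear_on_subset by blast
  obtain c where
      "\<And>u. supported_on F u \<Longrightarrow> (\<Sum>i\<in>F. w i * u i) - p (\<lambda>i. u i - unitvec j i) \<le> c"
      "\<And>v. supported_on F v \<Longrightarrow> c \<le> p (\<lambda>i. v i + unitvec j i) - (\<Sum>i\<in>F. w i * v i)"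
    using exists_extension_value[OF insert.prems(1) w] by auto
  then show ?case
    using dominated_functional_insert[OF insert.prems(1) w insert.hyps] by blast
qed

text \<open>The one-sided directional derivative p'(x0; y) of p at x0: the expression is non-increasing
  in t, so the infimum is its limit as t \<rightarrow> \<infinity>.\<close>
definition dir_deriv :: "((nat \<Rightarrow> real) \<Rightarrow> real) \<Rightarrow> (nat \<Rightarrow> real) \<Rightarrow> (nat \<Rightarrow> real) \<Rightarrow> real" where
  "dir_deriv p x0 y = (INF t\<in>{0..}. p (\<lambda>i. y i + t * x0 i) - t * p x0)"

context
  fixes I p x0
  assumes p: "sublinear_on I p" and x0: "supported_on I x0"
begin

private lemma supported_on_add_multiple: "supported_on I y \<Longrightarrow> supported_on I (\<lambda>i. y i + t * x0 i)"
  using x0 by (simp add: supported_on_def)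

lemma dir_deriv_le:
  assumes y: "supported_on I y" and "0 \<le> t"
  shows "dir_deriv p x0 y \<le> p (\<lambda>i. y i + t * x0 i) - t * p x0"
proof -
  have "- p (\<lambda>i. - y i) \<le> p (\<lambda>i. y i + s * x0 i) - s * p x0" if "0 \<le> s" for s
  proof -
    have "s * p x0 = p (\<lambda>i. (y i + s * x0 i) + - y i)"
      using sublinear_on_scale_nonneg[OF p x0 that] by simp
    also have "\<dots> \<le> p (\<lambda>i. y i + s * x0 i) + p (\<lambda>i. - y i)"
      by (rule sublinear_on_add[OF p supported_on_add_multiple[OF y] supported_on_minus[OF y]])
    finally show ?thesis by simp
  qed
  then have "bdd_below ((\<lambda>s. p (\<lambda>i. y i + s * x0 i) - s * p x0) ` {0..})"
    by (intro bdd_belowI[of _ "- p (\<lambda>i. - y i)"]) auto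
  then show ?thesis
    unfolding dir_deriv_def by (rule cINF_lower) (use \<open>0 \<le> t\<close> in simp)
qed

lemma dir_deriv_greatest:
  "(\<And>t. 0 \<le> t \<Longrightarrow> z \<le> p (\<lambda>i. y i + t * x0 i) - t * p x0) \<Longrightarrow> z \<le> dir_deriv p x0 y"
  unfolding dir_deriv_def by (rule cINF_greatest) auto

lemma dir_deriv_add:
  assumes y: "supported_on I y" and z: "supported_on I z"
  shows "dir_deriv p x0 (\<lambda>i. y i + z i) \<le> dir_deriv p x0 y + dir_deriv p x0 z"
proof -
  have split: "dir_deriv p x0 (\<lambda>i. y i + z i)
          \<le> (p (\<lambda>i. y i + t * x0 i) - t * p x0) + (p (\<lambda>i. z i + s * x0 i) - s * p x0)"
    if "0 \<le> t" "0 \<le> s" for t s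
  proof -
    have "dir_deriv p x0 (\<lambda>i. y i + z i) \<le> p (\<lambda>i. (y i + t * x0 i) + (z i + s * x0 i)) - (t + s) * p x0"
      using dir_deriv_le[OF supported_on_add[OF y z], of "t + s"] that
      by (simp add: algebra_simps)
    also have "\<dots> \<le> p (\<lambda>i. y i + t * x0 i) + p (\<lambda>i. z i + s * x0 i) - (t + s) * p x0"
      using sublinear_on_add[OF p supported_on_add_multiple[OF y] supported_on_add_multiple[OF z]]
      by simp
    finally show ?thesis by (simp add: algebra_simps)
  qed
  have bound: "dir_deriv p x0 (\<lambda>i. y i + z i) - (p (\<lambda>i. y i + t * x0 i) - t * p x0)
      \<le> dir_deriv p x0 z" if "0 \<le> t" for t
  proof (rule dir_deriv_greatest)
    fix s :: real assume "0 \<le> s"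
    show "dir_deriv p x0 (\<lambda>i. y i + z i) - (p (\<lambda>i. y i + t * x0 i) - t * p x0)
      \<le> p (\<lambda>i. z i + s * x0 i) - s * p x0"
      using split[OF that \<open>0 \<le> s\<close>] by linarith
  qed
  have "dir_deriv p x0 (\<lambda>i. y i + z i) - dir_deriv p x0 z \<le> dir_deriv p x0 y"
  proof (rule dir_deriv_greatest)
    fix t :: real assume "0 \<le> t"
    from bound[OF this] show "dir_deriv p x0 (\<lambda>i. y i + z i) - dir_deriv p x0 z
      \<le> p (\<lambda>i. y i + t * x0 i) - t * p x0" by linarith
  qed
  then show ?thesis by simp
qed

lemma dir_deriv_scale:
  assumes y: "supported_on I y" and a: "0 < a"
  shows "dir_deriv p x0 (\<lambda>i. a * y i) = a * dir_deriv p x0 y"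
proof -
  have scaled: "p (\<lambda>i. a * y i + (a * t) * x0 i) - (a * t) * p x0 = a * (p (\<lambda>i. y i + t * x0 i) - t * p x0)"
    for t
  proof -
    have "(\<lambda>i. a * y i + (a * t) * x0 i) = (\<lambda>i. a * (y i + t * x0 i))"
      by (simp add: algebra_simps)
    then have "p (\<lambda>i. a * y i + (a * t) * x0 i) = a * p (\<lambda>i. y i + t * x0 i)"
      by (simp only:) (rule sublinear_on_scale[OF p supported_on_add_multiple[OF y] a])
    then show ?thesis by (simp add: algebra_simps)
  qed
  have "dir_deriv p x0 (\<lambda>i. a * y i) \<le> a * dir_deriv p x0 y"
  proof -
    have "dir_deriv p x0 (\<lambda>i. a * y i) / a \<le> p (\<lambda>i. y i + t * x0 i) - t * p x0" if "0 \<le> t" for t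
      using dir_deriv_le[OF supported_on_scale[OF y], of "a * t" a] that a scaled[of t]
      by (simp add: pos_divide_le_eq mult.commute)
    then have "dir_deriv p x0 (\<lambda>i. a * y i) / a \<le> dir_deriv p x0 y"
      by (rule dir_deriv_greatest)
    then show ?thesis
      using a by (simp add: pos_divide_le_eq mult.commute)
  qed
  moreover have "a * dir_deriv p x0 y \<le> dir_deriv p x0 (\<lambda>i. a * y i)"
  proof (rule dir_deriv_greatest)
    fix t :: real assume "0 \<le> t"
    then have "a * dir_deriv p x0 y \<le> a * (p (\<lambda>i. y i + (t / a) * x0 i) - (t / a) * p x0)"
      using dir_deriv_le[OF y, of "t / a"] a by simp
    also have "\<dots> = p (\<lambda>i. a * y i + t * x0 i) - t * p x0"
      using scaled[of "t / a"] a by simp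
    finally show "a * dir_deriv p x0 y \<le> p (\<lambda>i. a * y i + t * x0 i) - t * p x0" .
  qed
  ultimately show ?thesis by simp
qed

lemma sublinear_on_dir_deriv: "sublinear_on I (dir_deriv p x0)"
  unfolding sublinear_on_def using dir_deriv_add dir_deriv_scale by blast

end

text \<open>A functional dominated by p'(x0; -) is dominated by p, and it is \<ge> p x0 at x0 since
  p'(x0; -x0) = - p x0.\<close>
lemma finite_hahn_banach_norming:
  assumes "finite I" and p: "sublinear_on I p" and x0: "supported_on I x0"
  shows "\<exists>w. (\<forall>y. supported_on I y \<longrightarrow> (\<Sum>i\<in>I. w i * y i) \<le> p y) \<and> (\<Sum>i\<in>I. w i * x0 i) = p x0"
proof -
  obtain w where w: "\<And>y. supported_on I y \<Longrightarrow> (\<Sum>i\<in>I. w i * y i) \<le> dir_deriv p x0 y"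
    using finite_hahn_banach[OF \<open>finite I\<close> sublinear_on_dir_deriv[OF p x0]] by blast
  have dominated: "(\<Sum>i\<in>I. w i * y i) \<le> p y" if "supported_on I y" for y
    using w[OF that] dir_deriv_le[OF p x0 that, of 0] by simp
  have "- (\<Sum>i\<in>I. w i * x0 i) \<le> dir_deriv p x0 (\<lambda>i. - x0 i)"
    using w[OF supported_on_minus[OF x0]] by (simp add: sum_negf)
  also have "\<dots> \<le> - p x0"
    using dir_deriv_le[OF p x0 supported_on_minus[OF x0], of 1] sublinear_on_zero[OF p] by simp
  finally show ?thesis
    using dominated[OF x0] dominated by (intro exI[of _ w]) force
qed

section \<open>Finite norming sets\<close>

lemma finite_grid_approximation:
  assumes "finite I" "0 < \<epsilon>"
  shows "\<exists>G. finite G \<and> (\<forall>g\<in>G. supported_on I g) \<and>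
           (\<forall>u. supported_on I u \<longrightarrow> (\<forall>i. \<bar>u i\<bar> \<le> 1) \<longrightarrow>
                (\<exists>g\<in>G. (\<Sum>i\<in>I. \<bar>u i - g i\<bar>) \<le> \<epsilon>))"
proof -
  define \<delta> where "\<delta> = \<epsilon> / (real (card I) + 1)"
  have \<delta>: "0 < \<delta>" "real (card I) * \<delta> \<le> \<epsilon>"
    using \<open>0 < \<epsilon>\<close> by (auto simp: \<delta>_def field_simps)
  define K where "K = \<lceil>1 / \<delta>\<rceil> + 1"
  define G where "G = {g. supported_on I g \<and> (\<forall>i\<in>I. g i \<in> (\<lambda>k. \<delta> * of_int k) ` {-K..K})}"
  have "\<exists>g\<in>G. (\<Sum>i\<in>I. \<bar>u i - g i\<bar>) \<le> \<epsilon>"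
    if u: "supported_on I u" "\<And>i. \<bar>u i\<bar> \<le> 1" for u
  proof
    define g where "g i = \<delta> * of_int (round (u i / \<delta>))" for i
    have "\<bar>u i / \<delta> - of_int (round (u i / \<delta>))\<bar> \<le> 1 / 2" for i
      using of_int_round_le[of "u i / \<delta>"] of_int_round_ge[of "u i / \<delta>"] by linarith
    then have half: "\<bar>u i - g i\<bar> \<le> \<delta> / 2" for i
      using \<delta>(1) by (simp add: g_def field_simps abs_le_iff)
    have close: "\<bar>u i - g i\<bar> \<le> \<delta>" for i
      using half[of i] \<delta>(1) by linarith
    have "\<bar>round (u i / \<delta>)\<bar> \<le> K" for i
    proof -
      have "\<bar>u i / \<delta>\<bar> \<le> 1 / \<delta>"
        using u(2)[of i] \<delta>(1) by (simp add: abs_div divide_right_mono)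
      then show ?thesis
        using of_int_round_le[of "u i / \<delta>"] of_int_round_ge[of "u i / \<delta>"]
          le_of_int_ceiling[of "1 / \<delta>"] unfolding K_def by linarith
    qed
    then show "g \<in> G"
      using u(1) by (auto simp: G_def g_def supported_on_def abs_le_iff minus_le_iff intro!: imageI)
    have "(\<Sum>i\<in>I. \<bar>u i - g i\<bar>) \<le> real (card I) * \<delta>"
      using sum_mono[of I "\<lambda>i. \<bar>u i - g i\<bar>" "\<lambda>_. \<delta>"] close by simp
    then show "(\<Sum>i\<in>I. \<bar>u i - g i\<bar>) \<le> \<epsilon>"
      using \<delta>(2) by linarith
  qed
  moreover have "finite G"
    unfolding G_def using \<open>finite I\<close> by (intro finite_supported_on_values) auto
  ultimately show ?thesis
    by (intro exI[of _ G]) (auto simp: G_def)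
qed

definition norming_set :: "nat set \<Rightarrow> ((nat \<Rightarrow> real) \<Rightarrow> real) \<Rightarrow> (nat \<Rightarrow> real) set \<Rightarrow> bool" where
  "norming_set I p W \<longleftrightarrow>
     (\<forall>w\<in>W. \<forall>x. supported_on I x \<longrightarrow> \<bar>\<Sum>i\<in>I. w i * x i\<bar> \<le> p x) \<and>
     (\<forall>x. supported_on I x \<longrightarrow> (\<exists>w\<in>W. p x \<le> 2 * \<bar>\<Sum>i\<in>I. w i * x i\<bar>))"

lemma
  assumes "norming_set I p W"
  shows norming_set_bounded: "w \<in> W \<Longrightarrow> supported_on I x \<Longrightarrow> \<bar>\<Sum>i\<in>I. w i * x i\<bar> \<le> p x"
    and norming_set_norming: "supported_on I x \<Longrightarrow> \<exists>w\<in>W. p x \<le> 2 * \<bar>\<Sum>i\<in>I. w i * x i\<bar>"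
  using assms unfolding norming_set_def by blast+

lemma dominated_functional_near_norming_point:
  assumes p: "sublinear_on I p"
    and l1: "\<And>x. supported_on I x \<Longrightarrow> p x \<le> (\<Sum>i\<in>I. \<bar>x i\<bar>)"
    and dominated: "\<And>y. supported_on I y \<Longrightarrow> (\<Sum>i\<in>I. w i * y i) \<le> p y"
    and norming: "(\<Sum>i\<in>I. w i * g i) = p g"
    and u: "supported_on I u" "p u = 1"
    and g: "supported_on I g" "(\<Sum>i\<in>I. \<bar>u i - g i\<bar>) \<le> 1 / 4"
  shows "1 / 2 \<le> (\<Sum>i\<in>I. w i * u i)"
proof -
  have "p (\<lambda>i. g i - u i) \<le> 1 / 4"
    using l1[OF supported_on_diff[OF g(1) u(1)]] g(2) by (simp add: abs_minus_commute)
  moreover have "1 \<le> p g + p (\<lambda>i. u i - g i)"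
    using sublinear_on_add[OF p g(1) supported_on_diff[OF u(1) g(1)]] u(2) by simp
  moreover have "p (\<lambda>i. u i - g i) \<le> 1 / 4"
    using l1[OF supported_on_diff[OF u(1) g(1)]] g(2) by simp
  moreover have "(\<Sum>i\<in>I. w i * u i) = p g - (\<Sum>i\<in>I. w i * (g i - u i))"
    using norming by (simp add: algebra_simps sum_subtractf)
  moreover have "(\<Sum>i\<in>I. w i * (g i - u i)) \<le> p (\<lambda>i. g i - u i)"
    using dominated[OF supported_on_diff[OF g(1) u(1)]] .
  ultimately show ?thesis by linarith
qed

lemma finite_norming_set:
  assumes "finite I" and p: "sublinear_on I p"
    and sym: "\<And>x. supported_on I x \<Longrightarrow> p (\<lambda>i. - x i) = p x"
    and coord: "\<And>x i. supported_on I x \<Longrightarrow> \<bar>x i\<bar> \<le> p x"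
    and l1: "\<And>x. supported_on I x \<Longrightarrow> p x \<le> (\<Sum>i\<in>I. \<bar>x i\<bar>)"
  shows "\<exists>W. finite W \<and> norming_set I p W"
proof -
  obtain G where G: "finite G" "\<And>g. g \<in> G \<Longrightarrow> supported_on I g"
    and approx: "\<And>u. supported_on I u \<Longrightarrow> (\<forall>i. \<bar>u i\<bar> \<le> 1) \<Longrightarrow>
                     \<exists>g\<in>G. (\<Sum>i\<in>I. \<bar>u i - g i\<bar>) \<le> 1 / 4"
    using finite_grid_approximation[OF \<open>finite I\<close>, of "1 / 4"] by auto
  obtain w where dominated: "\<And>g y. g \<in> G \<Longrightarrow> supported_on I y \<Longrightarrow> (\<Sum>i\<in>I. w g i * y i) \<le> p y"
    and norming: "\<And>g. g \<in> G \<Longrightarrow> (\<Sum>i\<in>I. w g i * g i) = p g"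
    using finite_hahn_banach_norming[OF \<open>finite I\<close> p G(2)] by metis
  have bounded: "\<bar>\<Sum>i\<in>I. w g i * x i\<bar> \<le> p x" if "g \<in> G" "supported_on I x" for g x
    using dominated[OF that] dominated[OF that(1) supported_on_minus[OF that(2)]] sym[OF that(2)]
    by (simp add: sum_negf)
  have "\<exists>g\<in>G. p x \<le> 2 * \<bar>\<Sum>i\<in>I. w g i * x i\<bar>" if x: "supported_on I x" for x
  proof (cases "p x = 0")
    case True
    then show ?thesis
      using approx[of "\<lambda>_. 0"] by auto
  next
    case False
    then have r: "0 < p x"
      using coord[OF x, of 0] abs_ge_zero[of "x 0"] by linarith
    define u where "u = (\<lambda>i. x i / p x)"
    have u: "supported_on I u" "p u = 1"
      using x sublinear_on_scale[OF p x, of "1 / p x"] r by (simp_all add: u_def supported_on_def)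
    then obtain g where "g \<in> G" and g: "(\<Sum>i\<in>I. \<bar>u i - g i\<bar>) \<le> 1 / 4"
      using approx[OF u(1)] coord[OF u(1)] by auto
    have "1 / 2 \<le> (\<Sum>i\<in>I. w g i * u i)"
      using dominated_functional_near_norming_point[OF p l1 dominated norming u G(2) g] \<open>g \<in> G\<close>
      by blast
    also have "\<dots> = (\<Sum>i\<in>I. w g i * x i) / p x"
      by (simp add: u_def sum_divide_distrib)
    finally show ?thesis
      using r \<open>g \<in> G\<close> by (intro bexI[of _ g]) (auto simp: field_simps)
  qed
  then show ?thesis
    using bounded G(1) unfolding norming_set_def by (intro exI[of _ "w ` G"]) blast
qed

section \<open>The norm of T^*[M, 1/2]\<close>

lemma c00_iff_supported_on: "x \<in> c00 \<longleftrightarrow> (\<exists>S. finite S \<and> supported_on S x)"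
  unfolding c00_def supported_on_def by (auto elim: finite_subset[rotated])

lemma supported_on_imp_c00: "finite S \<Longrightarrow> supported_on S x \<Longrightarrow> x \<in> c00"
  using c00_iff_supported_on by blast

lemma c00_eventually_zero:
  assumes "x \<in> c00" shows "\<exists>B. \<forall>i\<ge>B. x i = 0"
proof -
  obtain B where "{i. x i \<noteq> 0} \<subseteq> {..<B}"
    using assms finite_nat_bounded unfolding c00_def by blast
  then show ?thesis by (auto simp: not_less[symmetric])
qed

lemma c00_imp_c0: "x \<in> c00 \<Longrightarrow> x \<in> c0"
  using c00_eventually_zero[of x] unfolding c0_def
  by (auto intro: tendsto_eventually eventually_sequentiallyI)

lemma c00_scale: "x \<in> c00 \<Longrightarrow> (\<lambda>i. a * x i) \<in> c00"
  unfolding c00_def by (auto elim: finite_subset[rotated])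

lemma c00_add: "x \<in> c00 \<Longrightarrow> y \<in> c00 \<Longrightarrow> (\<lambda>i. x i + y i) \<in> c00"
proof -
  assume "x \<in> c00" "y \<in> c00"
  then have "finite ({i. x i \<noteq> 0} \<union> {i. y i \<noteq> 0})"
    by (simp add: c00_def)
  then show ?thesis
    unfolding c00_def mem_Collect_eq by (rule finite_subset[rotated]) auto
qed

lemma c00_sum: "(\<And>k. k \<in> S \<Longrightarrow> x k \<in> c00) \<Longrightarrow> (\<lambda>i. \<Sum>k\<in>S. x k i) \<in> c00"
proof (induction S rule: infinite_finite_induct)
  case (insert k S)
  then show ?case
    using c00_add[of "x k" "\<lambda>i. \<Sum>k\<in>S. x k i"] by simp
qed (simp_all add: c00_def)

lemma c00_restrict: "x \<in> c00 \<Longrightarrow> (\<lambda>i. indicator E i * x i) \<in> c00"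
  unfolding c00_def by (auto elim: finite_subset[rotated])

lemma admissible_less:
  assumes adm: "admissible M Es" and "k < k'" "k' < length Es"
  shows "\<forall>a\<in>Es!k. \<forall>b\<in>Es!k'. a < b"
  using assms(2,3)
proof (induction k' rule: less_induct)
  case (less k')
  then obtain k'' where k'': "k' = Suc k''" by (cases k') auto
  have succ: "\<forall>a\<in>Es!k''. \<forall>b\<in>Es!k'. a < b"
    using adm less.prems k'' unfolding admissible_def by auto
  show ?case
  proof (cases "k = k''")
    case False
    then have before: "\<forall>a\<in>Es!k. \<forall>b\<in>Es!k''. a < b"
      using less.IH[of k''] less.prems k'' by simp
    obtain c where "c \<in> Es!k''"
      using adm less.prems k'' unfolding admissible_def by fastforce
    then show ?thesis
      using before succ by (meson order.strict_trans)
  qed (use succ in simp)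
qed

lemma admissible_disjoint:
  assumes "admissible M Es" shows "disjoint_family_on (\<lambda>k. Es!k) {..<length Es}"
  unfolding disjoint_family_on_def
proof (intro ballI impI)
  fix k k' assume "k \<in> {..<length Es}" "k' \<in> {..<length Es}" "k \<noteq> k'"
  then consider "k < k'" "k' < length Es" | "k' < k" "k < length Es"
    by fastforce
  then show "Es!k \<inter> Es!k' = {}"
    by cases (fastforce dest: admissible_less[OF assms])+
qed

lemma Theta_zero: "(\<lambda>_. 0) \<in> Theta M"
proof -
  have "(\<lambda>i. 0 * unitvec 0 i + 0 * unitvec 0 i) \<in> Theta M"
    by (rule Theta.absconv[OF Theta.basis Theta.basis]) simp
  then show ?thesis by simp
qed

lemma Theta_scale: "y \<in> Theta M \<Longrightarrow> \<bar>a\<bar> \<le> 1 \<Longrightarrow> (\<lambda>i. a * y i) \<in> Theta M"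
  using Theta.absconv[of y M y a 0] by simp

lemma Theta_abs_le_1: "y \<in> Theta M \<Longrightarrow> \<bar>y i\<bar> \<le> 1"
proof (induction y arbitrary: i rule: Theta.induct)
  case (basis n)
  then show ?case by (simp add: unitvec_def)
next
  case (absconv x y a b)
  have "\<bar>a * x i + b * y i\<bar> \<le> \<bar>a\<bar> * \<bar>x i\<bar> + \<bar>b\<bar> * \<bar>y i\<bar>"
    by (metis abs_mult abs_triangle_ineq)
  also have "\<dots> \<le> \<bar>a\<bar> + \<bar>b\<bar>"
    using absconv.IH by (intro add_mono mult_right_le_one_le) auto
  finally show ?case
    using absconv.hyps by simp
next
  case (admis Es xs)
  show ?case
  proof (cases "\<exists>k<length Es. i \<in> Es!k")
    case True
    then obtain k where k: "k < length Es" "i \<in> Es!k" by blast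
    have "(\<Sum>k'<length Es. indicator (Es!k') i * (xs!k') i) = (xs!k) i"
      using sum_indicator_disjoint_family[OF admissible_disjoint[OF admis.hyps(1)], of i k "\<lambda>k'. (xs!k') i"] k
      by (simp add: mult.commute)
    moreover have "\<bar>(xs!k) i\<bar> \<le> 1"
      using admis.IH admis.hyps(2) k(1) by simp
    ultimately show ?thesis by simp
  qed simp
qed

lemma Theta_restrict: "y \<in> Theta M \<Longrightarrow> (\<lambda>i. indicator E i * y i) \<in> Theta M"
proof (induction y rule: Theta.induct)
  case (basis n)
  have "(\<lambda>i. indicator E i * unitvec n i) = (if n \<in> E then unitvec n else (\<lambda>_. 0))"
    by (auto simp: unitvec_def)
  then show ?case
    by (simp add: Theta.basis Theta_zero)
next
  case (absconv x y a b)
  then show ?case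
    using Theta.absconv[OF absconv.IH absconv.hyps(3)] by (simp add: algebra_simps)
next
  case (admis Es xs)
  let ?xs = "map (\<lambda>z i. indicator E i * z i) xs"
  have "(\<lambda>i. (1/2) * (\<Sum>k<length Es. indicator (Es!k) i * (?xs!k) i)) \<in> Theta M"
    using admis by (intro Theta.admis) auto
  moreover have "(\<Sum>k<length Es. indicator (Es!k) i * (?xs!k) i) =
                 indicator E i * (\<Sum>k<length Es. indicator (Es!k) i * (xs!k) i)" for i
    unfolding sum_distrib_left using admis.hyps(2) by (intro sum.cong) auto
  ultimately show ?case by simp
qed

lemma Theta_l1_ball:
  assumes "finite S"
  shows "supported_on S x \<Longrightarrow> (\<Sum>i\<in>S. \<bar>x i\<bar>) \<le> 1 \<Longrightarrow> x \<in> Theta M"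
  using assms
proof (induction S arbitrary: x rule: finite_induct)
  case empty
  then show ?case by (simp add: supported_on_empty Theta_zero)
next
  case (insert j S)
  define r where "r = x(j := 0)"
  define b where "b = (\<Sum>i\<in>S. \<bar>x i\<bar>)"
  have r: "supported_on S r"
    using insert.prems by (auto simp: supported_on_def r_def)
  have sum_r: "(\<Sum>i\<in>S. \<bar>r i\<bar>) = b"
    unfolding b_def r_def using insert.hyps by (intro sum.cong) auto
  have "(\<lambda>i. r i / b) \<in> Theta M" if "b > 0"
    using insert.IH[of "\<lambda>i. r i / b"] r that sum_r
    by (simp add: supported_on_def sum_divide_distrib[symmetric])
  moreover have "r = (\<lambda>_. 0)" if "b = 0"
    using that r sum_r insert.hyps(1) by (auto simp: supported_on_def sum_nonneg_eq_0_iff)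
  moreover have "\<bar>x j\<bar> + b \<le> 1" "0 \<le> b"
    using insert by (auto simp: b_def sum_nonneg)
  ultimately consider "0 < b" "(\<lambda>i. r i / b) \<in> Theta M" | "b = 0" "r = (\<lambda>_. 0)"
    by fastforce
  then show ?case
  proof cases
    case 1
    then have "x = (\<lambda>i. x j * unitvec j i + b * (r i / b))"
      by (auto simp: r_def unitvec_def fun_eq_iff)
    then show ?thesis
      using Theta.absconv[OF Theta.basis 1(2), of "x j" b j] \<open>\<bar>x j\<bar> + b \<le> 1\<close> 1(1) by simp
  next
    case 2
    then have "x = (\<lambda>i. x j * unitvec j i + 0 * unitvec j i)"
      by (auto simp: r_def unitvec_def fun_eq_iff split: if_splits)
    then show ?thesis
      using Theta.absconv[OF Theta.basis Theta.basis, of "x j" 0 j j] \<open>\<bar>x j\<bar> + b \<le> 1\<close> 2(1) by simp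
  qed
qed

lemma Theta_absorbing:
  assumes "x \<in> c00"
  shows "\<exists>t>0. \<exists>y\<in>Theta M. x = (\<lambda>i. t * y i)"
proof -
  obtain S where S: "finite S" "supported_on S x"
    using assms unfolding c00_iff_supported_on by blast
  define t where "t = (\<Sum>i\<in>S. \<bar>x i\<bar>) + 1"
  have t: "0 < t"
    by (simp add: t_def add_nonneg_pos sum_nonneg)
  have "(\<Sum>i\<in>S. \<bar>x i / t\<bar>) \<le> 1"
    using t by (simp add: t_def sum_divide_distrib[symmetric])
  then have "(\<lambda>i. x i / t) \<in> Theta M"
    using Theta_l1_ball[OF S(1)] S(2) by (simp add: supported_on_def)
  moreover have "x = (\<lambda>i. t * (x i / t))"
    using t by simp
  ultimately show ?thesis
    using t by (intro exI[of _ t] conjI bexI[of _ "\<lambda>i. x i / t"])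
qed

lemma normM_le_scaled_Theta: "0 < t \<Longrightarrow> y \<in> Theta M \<Longrightarrow> x = (\<lambda>i. t * y i) \<Longrightarrow> normM M x \<le> t"
  unfolding normM_def by (rule cInf_lower) (auto intro: bdd_belowI[of _ 0])

lemma normM_nonneg: "x \<in> c00 \<Longrightarrow> 0 \<le> normM M x"
  unfolding normM_def by (rule cInf_greatest) (use Theta_absorbing in auto)

lemma normM_less_imp_Theta:
  assumes "x \<in> c00" "normM M x < s"
  shows "\<exists>y\<in>Theta M. x = (\<lambda>i. s * y i)"
proof -
  obtain t y where "t < s" "0 < t" "y \<in> Theta M" "x = (\<lambda>i. t * y i)"
    using cInf_lessD[of "{t. 0 < t \<and> (\<exists>y\<in>Theta M. x = (\<lambda>i. t * y i))}" s]
      Theta_absorbing[OF assms(1)] assms(2) unfolding normM_def by auto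
  moreover from this have "(\<lambda>i. (t / s) * y i) \<in> Theta M"
    by (intro Theta_scale) auto
  ultimately show ?thesis
    by (intro bexI[of _ "\<lambda>i. (t / s) * y i"]) auto
qed

lemma abs_le_normM:
  assumes "x \<in> c00" shows "\<bar>x i\<bar> \<le> normM M x"
proof (rule dense_ge)
  fix s assume s: "normM M x < s"
  obtain y where y: "y \<in> Theta M" "x = (\<lambda>i. s * y i)"
    using normM_less_imp_Theta[OF assms s] by auto
  have "0 < s"
    using normM_nonneg[OF assms, of M] \<open>normM M x < s\<close> by simp
  then show "\<bar>x i\<bar> \<le> s"
    using Theta_abs_le_1[OF y(1), of i] by (simp add: y(2) abs_mult mult_le_cancel_left1)
qed

lemma normM_zero: "normM M (\<lambda>_. 0) = 0"
proof (rule antisym)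
  show "normM M (\<lambda>_. 0) \<le> 0"
    by (rule dense_ge) (auto intro: normM_le_scaled_Theta[OF _ Theta_zero])
qed (simp add: normM_nonneg c00_def)

lemma normM_scale_le:
  assumes "x \<in> c00" shows "normM M (\<lambda>i. a * x i) \<le> \<bar>a\<bar> * normM M x"
proof (cases "a = 0")
  case False
  show ?thesis
  proof (rule dense_ge)
    fix z assume z: "\<bar>a\<bar> * normM M x < z"
    then have "normM M x < z / \<bar>a\<bar>"
      using False by (simp add: field_simps)
    from normM_less_imp_Theta[OF assms this]
    obtain y where y: "y \<in> Theta M" "x = (\<lambda>i. (z / \<bar>a\<bar>) * y i)"
      by auto
    have "0 < z"
      using z normM_nonneg[OF assms, of M] by (meson abs_ge_zero le_less_trans mult_nonneg_nonneg)
    moreover have "(\<lambda>i. sgn a * y i) \<in> Theta M"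
      using Theta_scale[OF y(1)] by (simp add: abs_sgn_eq)
    moreover have "(\<lambda>i. a * x i) = (\<lambda>i. z * (sgn a * y i))"
      using False by (auto simp: y(2) fun_eq_iff sgn_if)
    ultimately show "normM M (\<lambda>i. a * x i) \<le> z"
      by (rule normM_le_scaled_Theta)
  qed
qed (simp add: normM_zero)

lemma normM_scale:
  assumes "x \<in> c00" shows "normM M (\<lambda>i. a * x i) = \<bar>a\<bar> * normM M x"
proof (cases "a = 0")
  case False
  have "normM M x = normM M (\<lambda>i. (1 / a) * (a * x i))"
    using False by simp
  also have "\<dots> \<le> \<bar>1 / a\<bar> * normM M (\<lambda>i. a * x i)"
    by (rule normM_scale_le[OF c00_scale[OF assms]])
  finally have "\<bar>a\<bar> * normM M x \<le> normM M (\<lambda>i. a * x i)"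
    using False by (simp add: field_simps)
  then show ?thesis
    using normM_scale_le[OF assms, of M a] by linarith
qed (simp add: normM_zero)

lemma normM_minus: "x \<in> c00 \<Longrightarrow> normM M (\<lambda>i. - x i) = normM M x"
  using normM_scale[of x M "-1"] by simp

lemma normM_triangle:
  assumes x: "x \<in> c00" and y: "y \<in> c00"
  shows "normM M (\<lambda>i. x i + y i) \<le> normM M x + normM M y"
proof (rule dense_ge)
  fix z assume z: "normM M x + normM M y < z"
  define s where "s = normM M x + (z - normM M x - normM M y) / 2"
  define t where "t = z - s"
  have st: "normM M x < s" "normM M y < t" "z = s + t"
    using z by (auto simp: s_def t_def field_simps)
  obtain u where u: "u \<in> Theta M" "x = (\<lambda>i. s * u i)"
    using normM_less_imp_Theta[OF x st(1)] by auto
  obtain v where v: "v \<in> Theta M" "y = (\<lambda>i. t * v i)"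
    using normM_less_imp_Theta[OF y st(2)] by auto
  have "0 < s" "0 < t"
    using st normM_nonneg[OF x, of M] normM_nonneg[OF y, of M] by linarith+
  then have "(\<lambda>i. (s / z) * u i + (t / z) * v i) \<in> Theta M"
    using st(3) by (intro Theta.absconv[OF u(1) v(1)]) (simp add: field_simps)
  moreover have "(\<lambda>i. x i + y i) = (\<lambda>i. z * ((s / z) * u i + (t / z) * v i))"
  proof -
    have "z \<noteq> 0"
      using \<open>0 < s\<close> \<open>0 < t\<close> st(3) by simp
    then show ?thesis
      by (simp add: u(2) v(2) fun_eq_iff field_simps)
  qed
  ultimately show "normM M (\<lambda>i. x i + y i) \<le> z"
    using normM_le_scaled_Theta \<open>0 < s\<close> \<open>0 < t\<close> st(3) by simp
qed

lemma normM_restrict_le: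
  assumes "x \<in> c00" shows "normM M (\<lambda>i. indicator E i * x i) \<le> normM M x"
proof (rule dense_ge)
  fix s assume s: "normM M x < s"
  obtain y where "y \<in> Theta M" "x = (\<lambda>i. s * y i)"
    using normM_less_imp_Theta[OF assms s] by auto
  moreover have "0 < s"
    using normM_nonneg[OF assms, of M] s by simp
  ultimately show "normM M (\<lambda>i. indicator E i * x i) \<le> s"
    using normM_le_scaled_Theta[OF _ Theta_restrict] by (simp add: mult.left_commute)
qed

lemma normM_le_l1:
  assumes "finite S" "supported_on S x" shows "normM M x \<le> (\<Sum>i\<in>S. \<bar>x i\<bar>)"
proof (rule dense_ge)
  fix z assume z: "(\<Sum>i\<in>S. \<bar>x i\<bar>) < z"
  then have "0 < z"
    by (meson abs_ge_zero le_less_trans sum_nonneg)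
  then have "(\<Sum>i\<in>S. \<bar>x i / z\<bar>) \<le> 1"
    using z by (simp add: sum_divide_distrib[symmetric])
  then have "(\<lambda>i. x i / z) \<in> Theta M"
    using Theta_l1_ball[OF assms(1)] assms(2) by (simp add: supported_on_def)
  then show "normM M x \<le> z"
    by (rule normM_le_scaled_Theta[OF \<open>0 < z\<close>]) (use \<open>0 < z\<close> in auto)
qed

lemma normM_admissible_sum_le:
  assumes adm: "admissible M Es" and "0 \<le> m"
    and x: "\<And>k. k < length Es \<Longrightarrow> x k \<in> c00 \<and> normM M (x k) \<le> m"
  shows "normM M (\<lambda>i. \<Sum>k<length Es. indicator (Es!k) i * x k i) \<le> 2 * m"
proof (rule dense_ge)
  fix r assume "2 * m < r"
  define s where "s = r / 2"
  have "0 < s" "m < s"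
    using \<open>2 * m < r\<close> \<open>0 \<le> m\<close> by (auto simp: s_def)
  have "\<exists>y. y \<in> Theta M \<and> x k = (\<lambda>i. s * y i)" if "k < length Es" for k
    using normM_less_imp_Theta[of "x k" M s] x[OF that] \<open>m < s\<close> by auto
  then obtain y where y: "\<And>k. k < length Es \<Longrightarrow> y k \<in> Theta M \<and> x k = (\<lambda>i. s * y k i)"
    by metis
  let ?ys = "map y [0..<length Es]"
  have z: "(\<lambda>i. (1/2) * (\<Sum>k<length Es. indicator (Es!k) i * (?ys!k) i)) \<in> Theta M"
    using y by (intro Theta.admis[OF adm]) auto
  have eq: "(\<lambda>i. \<Sum>k<length Es. indicator (Es!k) i * x k i)
      = (\<lambda>i. r * ((1/2) * (\<Sum>k<length Es. indicator (Es!k) i * (?ys!k) i)))"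
  proof
    fix i
    have "(\<Sum>k<length Es. indicator (Es!k) i * x k i)
        = (\<Sum>k<length Es. r * ((1/2) * (indicator (Es!k) i * (?ys!k) i)))"
      using y by (intro sum.cong) (auto simp: s_def)
    then show "(\<Sum>k<length Es. indicator (Es!k) i * x k i)
        = r * ((1/2) * (\<Sum>k<length Es. indicator (Es!k) i * (?ys!k) i))"
      by (simp only: sum_distrib_left)
  qed
  show "normM M (\<lambda>i. \<Sum>k<length Es. indicator (Es!k) i * x k i) \<le> r"
    by (rule normM_le_scaled_Theta[OF _ z eq]) (use \<open>0 < s\<close> in \<open>simp add: s_def\<close>)
qed

lemma sublinear_on_normM: "finite I \<Longrightarrow> sublinear_on I (normM M)"
  unfolding sublinear_on_def using normM_triangle normM_scale supported_on_imp_c00 by simp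

section \<open>Blocks\<close>

definition block_start :: "(nat \<Rightarrow> nat) \<Rightarrow> nat \<Rightarrow> nat" where
  "block_start a n = (case n of 0 \<Rightarrow> 0 | Suc m \<Rightarrow> a m)"

definition block :: "(nat \<Rightarrow> nat) \<Rightarrow> nat \<Rightarrow> nat set" where
  "block a n = {block_start a n..<a n}"

definition block_proj :: "(nat \<Rightarrow> nat) \<Rightarrow> nat \<Rightarrow> (nat \<Rightarrow> real) \<Rightarrow> nat \<Rightarrow> real" where
  "block_proj a n x = (\<lambda>i. indicator (block a n) i * x i)"

lemma block_start_0 [simp]: "block_start a 0 = 0"
  and block_start_Suc [simp]: "block_start a (Suc n) = a n"
  by (simp_all add: block_start_def)

lemma finite_block [simp]: "finite (block a n)"
  by (simp add: block_def)

lemma block_disjoint: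
  assumes a: "strict_mono a" and "m < n"
  shows "block a m \<inter> block a n = {}"
proof -
  obtain n' where n': "n = Suc n'" "m \<le> n'"
    using \<open>m < n\<close> by (cases n) auto
  then have "a m \<le> a n'"
    using a by (simp add: strict_mono_less_eq)
  then show ?thesis
    using n' by (auto simp: block_def)
qed

lemma sum_indicator_blocks:
  assumes "strict_mono a"
  shows "(\<Sum>n<Suc K. indicator (block a n) i) = (indicator {..<a K} i :: real)"
proof (induction K)
  case 0
  then show ?case by (simp add: block_def lessThan_atLeast0)
next
  case (Suc K)
  have "a K < a (Suc K)"
    using assms by (simp add: strict_monoD)
  then have "{..<a (Suc K)} = {..<a K} \<union> block a (Suc K)" "{..<a K} \<inter> block a (Suc K) = {}"
    by (auto simp: block_def)
  then show ?case
    using Suc by (simp add: indicator_disj_union)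
qed

lemma c00_below_block:
  fixes a :: "nat \<Rightarrow> nat"
  assumes "strict_mono a" "x \<in> c00"
  shows "\<exists>K. \<forall>i\<ge>a K. x i = 0"
proof -
  obtain B where "\<forall>i\<ge>B. x i = 0"
    using c00_eventually_zero[OF assms(2)] by blast
  moreover have "B \<le> a B"
    using seq_suble[OF assms(1)] .
  ultimately show ?thesis
    by (meson order_trans)
qed

lemma block_decomposition:
  assumes "strict_mono a" "\<forall>i\<ge>a K. x i = 0"
  shows "x = (\<lambda>i. \<Sum>n<Suc K. block_proj a n x i)"
proof
  fix i
  have "(\<Sum>n<Suc K. block_proj a n x i) = indicator {..<a K} i * x i"
    unfolding block_proj_def sum_distrib_right[symmetric] sum_indicator_blocks[OF assms(1)] ..
  then show "x i = (\<Sum>n<Suc K. block_proj a n x i)"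
    using assms(2) by (cases "i < a K") auto
qed

lemma block_proj_vanishes:
  assumes "strict_mono a" "\<forall>i\<ge>a K. x i = 0" "K < n"
  shows "block_proj a n x = (\<lambda>_. 0)"
proof -
  obtain n' where "n = Suc n'" "K \<le> n'"
    using \<open>K < n\<close> by (cases n) auto
  then have "a K \<le> block_start a n"
    using assms(1) by (simp add: strict_mono_less_eq)
  then show ?thesis
    using assms(2) by (auto simp: block_proj_def block_def indicator_def)
qed

lemma block_proj_c00: "x \<in> c00 \<Longrightarrow> block_proj a n x \<in> c00"
  unfolding block_proj_def by (rule c00_restrict)

lemma normM_block_proj_le: "x \<in> c00 \<Longrightarrow> normM M (block_proj a n x) \<le> normM M x"
  unfolding block_proj_def by (rule normM_restrict_le)

text \<open>The blocks after the first one are admissible: a_k \<in> A marks the start of block k + 1.\<close>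
lemma admissible_blocks:
  assumes "strict_mono a" "range a \<subseteq> A" "A \<in> M"
  shows "admissible M (map (\<lambda>k. block a (Suc k)) [0..<K])"
  unfolding admissible_def using assms
  by (auto simp: block_def strict_mono_def image_subset_iff intro!: exI[of _ "map a [0..<K]"] exI[of _ A])

lemma normM_le_block_sup:
  assumes a: "strict_mono a" "range a \<subseteq> A" "A \<in> M" and x: "x \<in> c00"
    and bound: "\<And>n. normM M (block_proj a n x) \<le> m"
  shows "normM M x \<le> 3 * m"
proof -
  obtain K where K: "\<forall>i\<ge>a K. x i = 0"
    using c00_below_block[OF a(1) x] by blast
  define Es where "Es = map (\<lambda>k. block a (Suc k)) [0..<K]"
  have "0 \<le> m"
    using bound[of 0] normM_nonneg[OF block_proj_c00[OF x]] by (rule order_trans[rotated])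
  have "x = (\<lambda>i. block_proj a 0 x i + (\<Sum>k<K. block_proj a (Suc k) x i))"
    by (subst block_decomposition[OF a(1) K]) (simp only: sum.lessThan_Suc_shift)
  also have "\<dots> = (\<lambda>i. block_proj a 0 x i + (\<Sum>k<length Es. indicator (Es!k) i * block_proj a (Suc k) x i))"
    by (simp add: Es_def block_proj_def)
  finally have eq: "x = \<dots>" .
  have "normM M x \<le> normM M (block_proj a 0 x) +
      normM M (\<lambda>i. \<Sum>k<length Es. indicator (Es!k) i * block_proj a (Suc k) x i)"
    by (subst (1) eq, rule normM_triangle[OF block_proj_c00[OF x] c00_sum])
      (simp add: c00_restrict block_proj_c00[OF x])
  also have "\<dots> \<le> m + 2 * m"
    using bound \<open>0 \<le> m\<close> block_proj_c00[OF x]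
    by (intro add_mono normM_admissible_sum_le) (auto simp: Es_def admissible_blocks[OF a])
  finally show ?thesis by simp
qed

section \<open>The c_0-sum of the blocks\<close>

definition block_size :: "(nat \<Rightarrow> nat) \<Rightarrow> nat \<Rightarrow> nat" where
  "block_size a n = a n - block_start a n"

definition block_coords :: "(nat \<Rightarrow> nat) \<Rightarrow> (nat \<Rightarrow> real) \<Rightarrow> nat \<Rightarrow> nat \<Rightarrow> real" where
  "block_coords a x n j = (if j < block_size a n then x (block_start a n + j) else 0)"

definition block_embed :: "(nat \<Rightarrow> nat) \<Rightarrow> nat \<Rightarrow> (nat \<Rightarrow> real) \<Rightarrow> nat \<Rightarrow> real" where
  "block_embed a n w i = (if i \<in> block a n then w (i - block_start a n) else 0)"

definition block_norm :: "nat set set \<Rightarrow> (nat \<Rightarrow> nat) \<Rightarrow> nat \<Rightarrow> (nat \<Rightarrow> real) \<Rightarrow> real" where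
  "block_norm M a n w = normM M (block_embed a n w)"

lemma block_embed_c00: "block_embed a n w \<in> c00"
  by (rule supported_on_imp_c00[OF finite_block, of a n]) (simp add: supported_on_def block_embed_def)

lemma block_embed_zero: "block_embed a n (\<lambda>_. 0) = (\<lambda>_. 0)"
  by (simp add: block_embed_def fun_eq_iff)

lemma block_norm_minus: "block_norm M a n (\<lambda>j. - w j) = block_norm M a n w"
proof -
  have "block_embed a n (\<lambda>j. - w j) = (\<lambda>i. - block_embed a n w i)"
    by (simp add: block_embed_def fun_eq_iff)
  then show ?thesis
    by (simp add: block_norm_def normM_minus[OF block_embed_c00])
qed

lemma block_embed_coords: "block_embed a n (block_coords a x n) = block_proj a n x"
  by (auto simp: fun_eq_iff block_embed_def block_coords_def block_proj_def block_def block_size_def)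

lemma block_norm_coords: "block_norm M a n (block_coords a x n) = normM M (block_proj a n x)"
  by (simp add: block_norm_def block_embed_coords)

lemma block_coords_embed:
  assumes "strict_mono a" "\<forall>j\<ge>block_size a m. w j = 0"
  shows "block_coords a (block_embed a m w) n j = (if m = n then w j else 0)"
proof -
  have "block_start a n + j \<in> block a n" if "j < block_size a n" for j
    using that by (simp add: block_def block_size_def)
  moreover have "block_start a n + j \<notin> block a m" if "j < block_size a n" "m \<noteq> n" for j
    using block_disjoint[OF assms(1), of m n] block_disjoint[OF assms(1), of n m] calculation[OF that(1)] that(2)
    by (cases "m < n") (auto simp: Int_commute)
  ultimately show ?thesis
    using assms(2) by (auto simp: block_coords_def block_embed_def not_less)
qed

lemma fd_norm_block_norm:
  "fd_norm (block_size a n) (block_norm M a n)"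
  unfolding fd_norm_def block_norm_def
proof (intro conjI allI impI)
  fix w :: "nat \<Rightarrow> real" assume w: "\<forall>i\<ge>block_size a n. w i = 0"
  show "0 \<le> normM M (block_embed a n w)"
    by (rule normM_nonneg[OF block_embed_c00])
  have "w j = 0" if "normM M (block_embed a n w) = 0" for j
  proof (cases "j < block_size a n")
    case True
    then have "block_embed a n w (block_start a n + j) = w j"
      by (simp add: block_embed_def block_def block_size_def)
    then show ?thesis
      using abs_le_normM[OF block_embed_c00, of a n w "block_start a n + j" M] that by simp
  qed (use w in simp)
  then show "normM M (block_embed a n w) = 0 \<longleftrightarrow> w = (\<lambda>_. 0)"
    by (auto simp: block_embed_zero normM_zero)
next
  fix w :: "nat \<Rightarrow> real" and c :: real
  have "block_embed a n (\<lambda>i. c * w i) = (\<lambda>i. c * block_embed a n w i)"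
    by (simp add: block_embed_def fun_eq_iff)
  then show "normM M (block_embed a n (\<lambda>i. c * w i)) = \<bar>c\<bar> * normM M (block_embed a n w)"
    by (simp add: normM_scale[OF block_embed_c00])
next
  fix w v :: "nat \<Rightarrow> real"
  have "block_embed a n (\<lambda>i. w i + v i) = (\<lambda>i. block_embed a n w i + block_embed a n v i)"
    by (simp add: block_embed_def fun_eq_iff)
  then show "normM M (block_embed a n (\<lambda>i. w i + v i)) \<le> normM M (block_embed a n w) + normM M (block_embed a n v)"
    by (simp add: normM_triangle[OF block_embed_c00 block_embed_c00])
qed

lemma block_coords_in_c0_sum:
  assumes "strict_mono a" "x \<in> c00"
  shows "block_coords a x \<in> c0_sum (block_size a) (block_norm M a)"
proof -
  obtain K where K: "\<forall>i\<ge>a K. x i = 0"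
    using c00_below_block[OF assms] by blast
  have "\<forall>\<^sub>F n in sequentially. block_norm M a n (block_coords a x n) = 0"
    using block_proj_vanishes[OF assms(1) K]
    by (intro eventually_sequentiallyI[of "Suc K"]) (simp add: block_norm_coords normM_zero)
  then show ?thesis
    unfolding c0_sum_def by (auto simp: block_coords_def tendsto_eventually)
qed

lemma c0_sum_norm_block_coords:
  assumes a: "strict_mono a" "range a \<subseteq> A" "A \<in> M" and x: "x \<in> c00"
  shows "(1/3) * normM M x \<le> c0_sum_norm (block_norm M a) (block_coords a x)"
    and "c0_sum_norm (block_norm M a) (block_coords a x) \<le> 1 * normM M x"
proof -
  have eq: "c0_sum_norm (block_norm M a) (block_coords a x) = (SUP n. normM M (block_proj a n x))"
    by (simp add: c0_sum_norm_def block_norm_coords)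
  have bdd: "bdd_above (range (\<lambda>n. normM M (block_proj a n x)))"
    using normM_block_proj_le[OF x] by (intro bdd_aboveI[of _ "normM M x"]) auto
  show "c0_sum_norm (block_norm M a) (block_coords a x) \<le> 1 * normM M x"
    unfolding eq using normM_block_proj_le[OF x] by (simp add: cSUP_least)
  have "normM M x \<le> 3 * (SUP n. normM M (block_proj a n x))"
    using normM_le_block_sup[OF a x] cSUP_upper[OF _ bdd] by blast
  then show "(1/3) * normM M x \<le> c0_sum_norm (block_norm M a) (block_coords a x)"
    unfolding eq by simp
qed

lemma block_coords_dense:
  assumes a: "strict_mono a" and y: "y \<in> c0_sum (block_size a) (block_norm M a)" and "0 < \<epsilon>"
  shows "\<exists>x\<in>c00. c0_sum_norm (block_norm M a) (\<lambda>n j. block_coords a x n j - y n j) < \<epsilon>"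
proof -
  have ysupp: "\<And>n. \<forall>j\<ge>block_size a n. y n j = 0" and ylim: "(\<lambda>n. block_norm M a n (y n)) \<longlonglongrightarrow> 0"
    using y unfolding c0_sum_def by auto
  obtain n0 where n0: "\<And>n. n0 \<le> n \<Longrightarrow> norm (block_norm M a n (y n) - 0) < \<epsilon> / 2"
    using LIMSEQ_D[OF ylim, of "\<epsilon> / 2"] \<open>0 < \<epsilon>\<close> by (meson half_gt_zero)
  define x where "x = (\<lambda>i. \<Sum>m<n0. block_embed a m (y m) i)"
  have "block_coords a x n j = (\<Sum>m<n0. block_coords a (block_embed a m (y m)) n j)" for n j
    by (simp add: x_def block_coords_def)
  then have coords: "block_coords a x n = (if n < n0 then y n else (\<lambda>_. 0))" for n
    by (simp add: block_coords_embed[OF a ysupp] fun_eq_iff)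
  have "block_norm M a n (\<lambda>j. block_coords a x n j - y n j) \<le> \<epsilon> / 2" for n
  proof (cases "n < n0")
    case True
    then show ?thesis
      using \<open>0 < \<epsilon>\<close> by (simp add: coords block_norm_def block_embed_zero normM_zero)
  next
    case False
    then show ?thesis
      using n0[of n] by (simp add: coords block_norm_minus abs_less_iff)
  qed
  then have "c0_sum_norm (block_norm M a) (\<lambda>n j. block_coords a x n j - y n j) \<le> \<epsilon> / 2"
    unfolding c0_sum_norm_def by (rule cSUP_least[OF UNIV_not_empty])
  moreover have "x \<in> c00"
    unfolding x_def by (rule c00_sum) (rule block_embed_c00)
  ultimately show ?thesis
    using \<open>0 < \<epsilon>\<close> by (intro bexI[of _ x]) auto
qed

lemma c0_sum_representation:
  fixes a :: "nat \<Rightarrow> nat"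
  assumes a: "strict_mono a" "range a \<subseteq> A" "A \<in> M"
  shows "\<exists>(d :: nat \<Rightarrow> nat) N (T :: (nat \<Rightarrow> real) \<Rightarrow> nat \<Rightarrow> nat \<Rightarrow> real) c C.
            (\<forall>n. fd_norm (d n) (N n)) \<and> 0 < c \<and>
            linear_on_c00' T \<and> (\<forall>x \<in> c00. T x \<in> c0_sum d N) \<and>
            (\<forall>x \<in> c00. c * normM M x \<le> c0_sum_norm N (T x) \<and>
                        c0_sum_norm N (T x) \<le> C * normM M x) \<and>
            (\<forall>y \<in> c0_sum d N. \<forall>\<epsilon> > 0. \<exists>x \<in> c00.
                        c0_sum_norm N (\<lambda>n i. T x n i - y n i) < \<epsilon>)"
proof (rule exI[of _ "block_size a"], rule exI[of _ "block_norm M a"], rule exI[of _ "block_coords a"],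
    rule exI[of _ "1/3"], rule exI[of _ 1], intro conjI)
  show "linear_on_c00' (block_coords a)"
    by (auto simp: linear_on_c00'_def block_coords_def fun_eq_iff)
qed (use fd_norm_block_norm block_coords_in_c0_sum[OF a(1)] c0_sum_norm_block_coords[OF a]
       block_coords_dense[OF a(1)] in \<open>auto simp del: mult_1\<close>)

section \<open>Embedding into c_0\<close>

lemma normM_finite_norming_set: "finite I \<Longrightarrow> \<exists>W. finite W \<and> norming_set I (normM M) W"
  by (rule finite_norming_set)
    (simp_all add: sublinear_on_normM supported_on_imp_c00 normM_minus abs_le_normM normM_le_l1)

definition norming_coords ::
    "(nat \<Rightarrow> nat) \<Rightarrow> (nat \<Rightarrow> (nat \<Rightarrow> real) list) \<Rightarrow> (nat \<Rightarrow> real) \<Rightarrow> nat \<Rightarrow> real" where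
  "norming_coords a L x j = (case prod_decode j of (n, k) \<Rightarrow>
     if k < length (L n) then \<Sum>i\<in>block a n. (L n ! k) i * x i else 0)"

lemma sum_block_proj: "(\<Sum>i\<in>block a n. w i * x i) = (\<Sum>i\<in>block a n. w i * block_proj a n x i)"
  by (intro sum.cong) (auto simp: block_proj_def)

lemma block_proj_supported: "supported_on (block a n) (block_proj a n x)"
  by (simp add: supported_on_def block_proj_def)

lemma linear_on_c00_norming_coords: "linear_on_c00 (norming_coords a L)"
  by (auto simp: linear_on_c00_def norming_coords_def fun_eq_iff sum.distrib sum_distrib_left
      algebra_simps split: prod.split)

lemma norming_coords_c00:
  assumes a: "strict_mono a" and x: "x \<in> c00"
  shows "norming_coords a L x \<in> c00"
proof -
  obtain K where K: "\<forall>i\<ge>a K. x i = 0"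
    using c00_below_block[OF a x] by blast
  have "{j. norming_coords a L x j \<noteq> 0} \<subseteq> prod_encode ` (SIGMA n:{..K}. {..<length (L n)})"
  proof
    fix j assume "j \<in> {j. norming_coords a L x j \<noteq> 0}"
    moreover obtain n k where j: "prod_decode j = (n, k)"
      by fastforce
    moreover have "n \<le> K" if "norming_coords a L x j \<noteq> 0"
    proof (rule ccontr)
      assume "\<not> n \<le> K"
      then have "block_proj a n x = (\<lambda>_. 0)"
        by (intro block_proj_vanishes[OF a K]) simp
      then have "(\<Sum>i\<in>block a n. (L n ! k) i * x i) = 0"
        using sum_block_proj[of "L n ! k" x a n] by simp
      moreover have "norming_coords a L x j = (if k < length (L n) then \<Sum>i\<in>block a n. (L n ! k) i * x i else 0)"
        using j by (simp add: norming_coords_def)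
      ultimately show False
        using that by (metis (full_types))
    qed
    ultimately show "j \<in> prod_encode ` (SIGMA n:{..K}. {..<length (L n)})"
      by (auto simp: norming_coords_def split: if_splits intro!: image_eqI[of j _ "(n, k)"]
          dest: arg_cong[where f = prod_encode])
  qed
  then show ?thesis
    unfolding c00_def mem_Collect_eq by (rule finite_subset) auto
qed

lemma abs_norming_coords_le:
  assumes x: "x \<in> c00" and L: "\<And>n. norming_set (block a n) (normM M) (set (L n))"
  shows "\<bar>norming_coords a L x j\<bar> \<le> normM M x"
proof -
  obtain n k where j: "prod_decode j = (n, k)"
    by fastforce
  have "\<bar>\<Sum>i\<in>block a n. (L n ! k) i * x i\<bar> \<le> normM M x" if "k < length (L n)"
  proof -
    have "\<bar>\<Sum>i\<in>block a n. (L n ! k) i * block_proj a n x i\<bar> \<le> normM M (block_proj a n x)"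
      using norming_set_bounded[OF L[of n] nth_mem[OF that] block_proj_supported] by simp
    then show ?thesis
      using normM_block_proj_le[OF x, of M a n] by (simp add: sum_block_proj[where a=a and n=n and x=x])
  qed
  then show ?thesis
    using j normM_nonneg[OF x, of M] by (simp add: norming_coords_def)
qed

lemma normM_block_proj_le_norming_coords:
  assumes L: "\<And>n. norming_set (block a n) (normM M) (set (L n))"
  shows "\<exists>j. normM M (block_proj a n x) \<le> 2 * \<bar>norming_coords a L x j\<bar>"
proof -
  obtain w where w: "w \<in> set (L n)"
    "normM M (block_proj a n x) \<le> 2 * \<bar>\<Sum>i\<in>block a n. w i * block_proj a n x i\<bar>"
    using norming_set_norming[OF L block_proj_supported] by auto
  then obtain k where k: "k < length (L n)" "L n ! k = w"
    by (auto simp: in_set_conv_nth)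
  then have "norming_coords a L x (prod_encode (n, k)) = (\<Sum>i\<in>block a n. w i * block_proj a n x i)"
    by (simp add: norming_coords_def sum_block_proj[where a=a and n=n and x=x])
  then show ?thesis
    using w(2) by metis
qed

lemma c0_norm_norming_coords:
  assumes a: "strict_mono a" "range a \<subseteq> A" "A \<in> M" and x: "x \<in> c00"
    and L: "\<And>n. norming_set (block a n) (normM M) (set (L n))"
  shows "(1/6) * normM M x \<le> c0_norm (norming_coords a L x)"
    and "c0_norm (norming_coords a L x) \<le> 1 * normM M x"
proof -
  have bdd: "bdd_above (range (\<lambda>j. \<bar>norming_coords a L x j\<bar>))"
    using abs_norming_coords_le[OF x L] by (intro bdd_aboveI[of _ "normM M x"]) auto
  show "c0_norm (norming_coords a L x) \<le> 1 * normM M x"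
    unfolding c0_norm_def using abs_norming_coords_le[OF x L] by (simp add: cSUP_least)
  have "normM M (block_proj a n x) \<le> 2 * c0_norm (norming_coords a L x)" for n
  proof -
    obtain j where "normM M (block_proj a n x) \<le> 2 * \<bar>norming_coords a L x j\<bar>"
      using normM_block_proj_le_norming_coords[OF L] by blast
    moreover have "\<bar>norming_coords a L x j\<bar> \<le> c0_norm (norming_coords a L x)"
      unfolding c0_norm_def by (rule cSUP_upper[OF _ bdd]) simp
    ultimately show ?thesis
      by simp
  qed
  then have "normM M x \<le> 3 * (2 * c0_norm (norming_coords a L x))"
    by (rule normM_le_block_sup[OF a x])
  then show "(1/6) * normM M x \<le> c0_norm (norming_coords a L x)"
    by simp
qed

lemma c0_embedding:
  fixes a :: "nat \<Rightarrow> nat"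
  assumes a: "strict_mono a" "range a \<subseteq> A" "A \<in> M"
  shows "\<exists>(T :: (nat \<Rightarrow> real) \<Rightarrow> nat \<Rightarrow> real) c C.
            0 < c \<and> linear_on_c00 T \<and> (\<forall>x \<in> c00. T x \<in> c0) \<and>
            (\<forall>x \<in> c00. c * normM M x \<le> c0_norm (T x) \<and> c0_norm (T x) \<le> C * normM M x)"
proof -
  have "\<exists>ws. norming_set (block a n) (normM M) (set ws)" for n
  proof -
    obtain W where "finite W" "norming_set (block a n) (normM M) W"
      using normM_finite_norming_set[OF finite_block] by blast
    moreover obtain ws where "set ws = W"
      using finite_list[OF \<open>finite W\<close>] by blast
    ultimately show ?thesis by blast
  qed
  then obtain L where L: "\<And>n. norming_set (block a n) (normM M) (set (L n))"
    by metis
  show ?thesis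
  proof (rule exI[of _ "norming_coords a L"], rule exI[of _ "1/6"], rule exI[of _ 1], intro conjI ballI)
    fix x :: "nat \<Rightarrow> real" assume x: "x \<in> c00"
    show "norming_coords a L x \<in> c0"
      by (rule c00_imp_c0[OF norming_coords_c00[OF a(1) x]])
    show "1/6 * normM M x \<le> c0_norm (norming_coords a L x)"
      by (rule c0_norm_norming_coords(1)[OF a x L])
    show "c0_norm (norming_coords a L x) \<le> 1 * normM M x"
      by (rule c0_norm_norming_coords(2)[OF a x L])
  qed (simp_all add: linear_on_c00_norming_coords)
qed

theorem lemma3p6:
  fixes M :: "nat set set"
  assumes "cantor_compact M"
    and "\<exists>A \<in> M. infinite A"
  shows "(\<exists>(d :: nat \<Rightarrow> nat) N (T :: (nat \<Rightarrow> real) \<Rightarrow> nat \<Rightarrow> nat \<Rightarrow> real) c C.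
            (\<forall>n. fd_norm (d n) (N n)) \<and> 0 < c \<and>
            linear_on_c00' T \<and> (\<forall>x \<in> c00. T x \<in> c0_sum d N) \<and>
            (\<forall>x \<in> c00. c * normM M x \<le> c0_sum_norm N (T x) \<and>
                        c0_sum_norm N (T x) \<le> C * normM M x) \<and>
            (\<forall>y \<in> c0_sum d N. \<forall>\<epsilon> > 0. \<exists>x \<in> c00.
                        c0_sum_norm N (\<lambda>n i. T x n i - y n i) < \<epsilon>))
       \<and> (\<exists>(T :: (nat \<Rightarrow> real) \<Rightarrow> nat \<Rightarrow> real) c C.
            0 < c \<and> linear_on_c00 T \<and> (\<forall>x \<in> c00. T x \<in> c0) \<and>
            (\<forall>x \<in> c00. c * normM M x \<le> c0_norm (T x) \<and> c0_norm (T x) \<le> C * normM M x))"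
proof -
  obtain A where A: "A \<in> M" "infinite A"
    using assms(2) by blast
  have a: "strict_mono (enumerate A)" "range (enumerate A) \<subseteq> A"
    using strict_mono_enumerate[OF A(2)] range_enumerate[OF A(2)] by auto
  show ?thesis
    by (rule conjI[OF c0_sum_representation[OF a A(1)] c0_embedding[OF a A(1)]])
qed

end
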